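(* Let $\mathfrak{n}$ be a $2$-step nilpotent real Lie algebra with center $\mathfrak{z}$ and commutator $\mathfrak{n}'$, and let $J$ be a linear map with $J^2=-I$ and $J\mathfrak{n}'\subset\mathfrak{z}$. Put $\mathfrak{z}_0=\mathfrak{n}'+J\mathfrak{n}'$. Let $\langle\cdot,\cdot\rangle$ be any inner product on $\mathfrak{n}$ with $\langle Jx,Jy\rangle=\langle x,y\rangle$, let $\mathfrak{v}$ be the orthogonal complement of $\mathfrak{z}_0$ (so $\mathfrak{v}$ is $J$-invariant, $\dim\mathfrak{v}=2n$), and $J_{\mathfrak{v}}=J|_{\mathfrak{v}}$. For $z\in\mathfrak{z}_0$ define $j(z)\in\operatorname{End}(\mathfrak{v})$ by $\langle j(z)v,w\rangle=\langle z,[v,w]\rangle$ for $v,w\in\mathfrak{v}$, and $S(z)=j(Jz)-J_{\mathfrak{v}}\circ j(z)$. Then $J$ is integrable (i.e. $N_J\equiv0$) if and only if $S(z)\circ J_{\mathfrak{v}}=J_{\mathfrak{v}}\circ S(z)$ for all $z\in\mathfrak{z}_0$. Moreover, for any subspace $\mathfrak{p}\subset\mathfrak{z}_0$ with $\mathfrak{z}_0=\mathfrak{p}\oplus J\mathfrak{p}$, $J$ is integrable if and only if $S(z)$ commutes with $J_{\mathfrak{v}}$ for all $z\in\mathfrak{p}$.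
   Context: $N_J(x,y)=[x,y]+J([Jx,y]+[x,Jy])-[Jx,Jy]$. A Lie algebra $\mathfrak{n}$ is $2$-step nilpotent if it is non-abelian and $\mathfrak{n}'=[\mathfrak{n},\mathfrak{n}]\subset\mathfrak{z}$. *)

theory Defs
  imports "HOL-Analysis.Analysis"
begin

definition lie_algebra :: "('a::real_vector \<Rightarrow> 'a \<Rightarrow> 'a) \<Rightarrow> bool" where
  "lie_algebra br \<longleftrightarrow> bilinear br \<and> (\<forall>x. br x x = 0) \<and>
     (\<forall>x y z. br x (br y z) + br y (br z x) + br z (br x y) = 0)"

definition lie_center :: "('a::real_vector \<Rightarrow> 'a \<Rightarrow> 'a) \<Rightarrow> 'a set" where
  "lie_center br = {z. \<forall>x. br z x = 0}"

definition commutator :: "('a::real_vector \<Rightarrow> 'a \<Rightarrow> 'a) \<Rightarrow> 'a set" where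
  "commutator br = span {br x y | x y. True}"

definition two_step_nilpotent :: "('a::real_vector \<Rightarrow> 'a \<Rightarrow> 'a) \<Rightarrow> bool" where
  "two_step_nilpotent br \<longleftrightarrow> lie_algebra br \<and> (\<exists>x y. br x y \<noteq> 0) \<and>
     commutator br \<subseteq> lie_center br"

definition nijenhuis :: "('a::real_vector \<Rightarrow> 'a \<Rightarrow> 'a) \<Rightarrow> ('a \<Rightarrow> 'a) \<Rightarrow> 'a \<Rightarrow> 'a \<Rightarrow> 'a" where
  "nijenhuis br J x y = br x y + J (br (J x) y + br x (J y)) - br (J x) (J y)"

definition integrable :: "('a::real_vector \<Rightarrow> 'a \<Rightarrow> 'a) \<Rightarrow> ('a \<Rightarrow> 'a) \<Rightarrow> bool" where
  "integrable br J \<longleftrightarrow> (\<forall>x y. nijenhuis br J x y = 0)"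

definition subspace_sum :: "'a::real_vector set \<Rightarrow> 'a set \<Rightarrow> 'a set" where
  "subspace_sum A B = {a + b | a b. a \<in> A \<and> b \<in> B}"

definition zeta0 :: "('a::real_vector \<Rightarrow> 'a \<Rightarrow> 'a) \<Rightarrow> ('a \<Rightarrow> 'a) \<Rightarrow> 'a set" where
  "zeta0 br J = subspace_sum (commutator br) (J ` commutator br)"

definition vspace :: "('a::real_inner \<Rightarrow> 'a \<Rightarrow> 'a) \<Rightarrow> ('a \<Rightarrow> 'a) \<Rightarrow> 'a set" where
  "vspace br J = {x. \<forall>z \<in> zeta0 br J. inner x z = 0}"

definition jmap :: "('a::real_inner \<Rightarrow> 'a \<Rightarrow> 'a) \<Rightarrow> ('a \<Rightarrow> 'a) \<Rightarrow> 'a \<Rightarrow> 'a \<Rightarrow> 'a" where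
  "jmap br J z v = (THE u. u \<in> vspace br J \<and> (\<forall>w \<in> vspace br J. inner u w = inner z (br v w)))"

definition Smap :: "('a::real_inner \<Rightarrow> 'a \<Rightarrow> 'a) \<Rightarrow> ('a \<Rightarrow> 'a) \<Rightarrow> 'a \<Rightarrow> 'a \<Rightarrow> 'a" where
  "Smap br J z v = jmap br J (J z) v - J (jmap br J z v)"

definition S_commutes :: "('a::real_inner \<Rightarrow> 'a \<Rightarrow> 'a) \<Rightarrow> ('a \<Rightarrow> 'a) \<Rightarrow> 'a \<Rightarrow> bool" where
  "S_commutes br J z \<longleftrightarrow> (\<forall>v \<in> vspace br J. Smap br J z (J v) = J (Smap br J z v))"

end

theory Submission
  imports Defs
begin

text \<open>For v, w in the orthogonal complement of z_0 and z in z_0 one computes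
  \<open>\<langle>z, N_J(v,w)\<rangle> = -\<langle>S(z) J v - J S(z) v, w\<rangle>\<close>. Since z_0 is central and J-stable,
  N_J(x,y) only depends on the components of x and y in v, and it takes values in z_0.
  Hence N_J vanishes iff all of its z_0-components vanish, i.e. iff every S(z) commutes
  with J. Finally S is additive and \<open>S(Jz) = -J S(z)\<close>, so commuting with J on p
  propagates to \<open>p + J p = z_0\<close>.\<close>

lemma lie_algebra_bilinear: "lie_algebra br \<Longrightarrow> bilinear br"
  unfolding lie_algebra_def by blast

lemma lie_algebra_anticomm:
  assumes "lie_algebra br"
  shows "br y x = - br x y"
proof -
  have bil: "bilinear br" and alt: "\<And>x. br x x = 0"
    using assms unfolding lie_algebra_def by blast+
  have "br (x + y) (x + y) = br x x + br x y + (br y x + br y y)"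
    by (simp add: bilinear_ladd[OF bil] bilinear_radd[OF bil])
  then have "br x y + br y x = 0" by (simp add: alt)
  then show ?thesis by (metis add.commute eq_neg_iff_add_eq_0)
qed

lemma bracket_in_commutator: "br x y \<in> commutator br"
  unfolding commutator_def by (rule span_base) blast

lemma subspace_commutator: "subspace (commutator br)"
  unfolding commutator_def by (rule subspace_span)

locale two_step_complex_structure =
  fixes br :: "'a::euclidean_space \<Rightarrow> 'a \<Rightarrow> 'a" and J :: "'a \<Rightarrow> 'a"
  assumes lie: "lie_algebra br"
    and commutator_central: "commutator br \<subseteq> lie_center br"
    and linear_J: "linear J"
    and J_J: "\<And>x. J (J x) = - x"
    and J_commutator_central: "J ` commutator br \<subseteq> lie_center br"
    and inner_J_J: "\<And>x y. inner (J x) (J y) = inner x y"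
begin

abbreviation "Z \<equiv> zeta0 br J"
abbreviation "V \<equiv> vspace br J"

lemmas bilinear_br = lie_algebra_bilinear[OF lie]
lemmas br_ladd = bilinear_ladd[OF bilinear_br]
lemmas br_radd = bilinear_radd[OF bilinear_br]

lemmas J_add = linear_add[OF linear_J]
lemmas J_diff = linear_diff[OF linear_J]
lemmas J_uminus = linear_neg[OF linear_J]

lemma inner_J_left: "inner (J x) y = - inner x (J y)"
  using inner_J_J[of "J x" y] by (simp add: J_J)

lemma zeta0_iff: "z \<in> Z \<longleftrightarrow> (\<exists>a b. a \<in> commutator br \<and> b \<in> commutator br \<and> z = a + J b)"
  unfolding zeta0_def subspace_sum_def by blast

lemma subspace_zeta0: "subspace Z"
  unfolding zeta0_def subspace_sum_def
  by (rule subspace_sums[OF subspace_commutator linear_subspace_image[OF linear_J subspace_commutator]])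

lemma zeta0_central_left: "z \<in> Z \<Longrightarrow> br z x = 0"
proof -
  assume "z \<in> Z"
  then obtain a b where "a \<in> commutator br" "b \<in> commutator br" "z = a + J b"
    by (auto simp: zeta0_iff)
  moreover have "br a x = 0" "br (J b) x = 0"
    using calculation commutator_central J_commutator_central
    unfolding lie_center_def by blast+
  ultimately show "br z x = 0" by (simp add: br_ladd)
qed

lemma zeta0_central_right: "z \<in> Z \<Longrightarrow> br x z = 0"
  using zeta0_central_left lie_algebra_anticomm[OF lie, of z x] by simp

lemma J_zeta0: "z \<in> Z \<Longrightarrow> J z \<in> Z"
proof -
  assume "z \<in> Z"
  then obtain a b where "a \<in> commutator br" "b \<in> commutator br" "z = a + J b"
    by (auto simp: zeta0_iff)
  moreover have "J z = - b + J a" using \<open>z = a + J b\<close> by (simp add: J_add J_J)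
  ultimately show "J z \<in> Z"
    using subspace_neg[OF subspace_commutator] zeta0_iff by blast
qed

lemma subspace_vspace: "subspace V"
  unfolding vspace_def subspace_def by (auto simp: inner_add_left)

lemma J_vspace: "v \<in> V \<Longrightarrow> J v \<in> V"
  unfolding vspace_def using J_zeta0 inner_J_left by auto

lemma inner_vspace_zeta0: "v \<in> V \<Longrightarrow> z \<in> Z \<Longrightarrow> inner v z = 0"
  unfolding vspace_def by auto

lemma zeta0_vspace_decomp:
  obtains a b where "a \<in> Z" "b \<in> V" "x = a + b"
proof -
  have span_Z: "span Z = Z" using subspace_zeta0 by (simp add: span_eq_iff)
  obtain a b where "a \<in> span Z" "\<And>w. w \<in> span Z \<Longrightarrow> orthogonal b w" "x = a + b"
    using orthogonal_subspace_decomp_exists[of Z x] by blast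
  then show thesis
    using that[of a b] unfolding span_Z vspace_def orthogonal_def by auto
qed

lemma vspace_eqI:
  assumes "u \<in> V" "u' \<in> V" "\<And>w. w \<in> V \<Longrightarrow> inner u w = inner u' w"
  shows "u = u'"
proof -
  have "u - u' \<in> V" using assms subspace_diff[OF subspace_vspace] by blast
  then have "inner (u - u') (u - u') = 0" using assms by (simp add: inner_diff_left)
  then show ?thesis by simp
qed

lemma jmap_exists: "\<exists>u \<in> V. \<forall>w \<in> V. inner u w = inner z (br v w)"
proof -
  have lin: "linear (br v)"
    using bilinear_br unfolding bilinear_def by blast
  obtain a u where "a \<in> Z" "u \<in> V" "adjoint (br v) z = a + u"
    by (rule zeta0_vspace_decomp)
  moreover have "inner (adjoint (br v) z) w = inner z (br v w)" for w
    using adjoint_works[OF lin, of w z] by (simp add: inner_commute)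
  ultimately have "inner u w = inner z (br v w)" if "w \<in> V" for w
    using inner_vspace_zeta0[OF that \<open>a \<in> Z\<close>] that
    by (metis add.left_neutral inner_add_left inner_commute)
  with \<open>u \<in> V\<close> show ?thesis by blast
qed

lemma jmap_eqI:
  assumes "u \<in> V" "\<And>w. w \<in> V \<Longrightarrow> inner u w = inner z (br v w)"
  shows "jmap br J z v = u"
  unfolding jmap_def
  by (rule the_equality) (use assms vspace_eqI in auto)

lemma jmap_in_vspace: "jmap br J z v \<in> V"
  and inner_jmap: "w \<in> V \<Longrightarrow> inner (jmap br J z v) w = inner z (br v w)"
  using jmap_exists[of z v] jmap_eqI by auto

lemma jmap_add: "jmap br J (z1 + z2) v = jmap br J z1 v + jmap br J z2 v"
  by (rule jmap_eqI)
    (auto simp: jmap_in_vspace subspace_vspace subspace_add inner_add_left inner_jmap)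

lemma jmap_uminus: "jmap br J (- z) v = - jmap br J z v"
  by (rule jmap_eqI) (auto simp: jmap_in_vspace subspace_vspace subspace_neg inner_jmap)

lemma Smap_add: "Smap br J (z1 + z2) v = Smap br J z1 v + Smap br J z2 v"
  unfolding Smap_def by (simp add: J_add J_diff jmap_add)

lemma Smap_J: "Smap br J (J z) v = - J (Smap br J z v)"
  unfolding Smap_def by (simp add: J_J J_diff jmap_uminus)

lemma Smap_in_vspace: "v \<in> V \<Longrightarrow> Smap br J z v \<in> V"
  unfolding Smap_def
  using jmap_in_vspace J_vspace subspace_diff[OF subspace_vspace] by simp

lemma inner_nijenhuis_Smap:
  assumes "v \<in> V" "w \<in> V"
  shows "inner z (nijenhuis br J v w) = - inner (Smap br J z (J v) - J (Smap br J z v)) w"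
proof -
  have "inner (Smap br J z (J v) - J (Smap br J z v)) w =
      inner (jmap br J (J z) (J v)) w + inner (jmap br J z (J v)) (J w)
      + inner (jmap br J (J z) v) (J w) - inner (jmap br J z v) w"
    unfolding Smap_def by (simp add: J_diff J_J inner_diff_left inner_add_left inner_J_left)
  also have "\<dots> = inner (J z) (br (J v) w) + inner z (br (J v) (J w))
      + inner (J z) (br v (J w)) - inner z (br v w)"
    using assms J_vspace by (simp add: inner_jmap)
  also have "\<dots> = - inner z (nijenhuis br J v w)"
    unfolding nijenhuis_def
    by (simp add: inner_add_left inner_add_right inner_diff_right inner_commute[of z "J _"] inner_J_left
        inner_commute[of "J z"])
  finally show ?thesis by simp
qed

lemma S_commutes_iff_inner_nijenhuis:
  "S_commutes br J z \<longleftrightarrow> (\<forall>v \<in> V. \<forall>w \<in> V. inner z (nijenhuis br J v w) = 0)"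
proof -
  have "Smap br J z (J v) = J (Smap br J z v) \<longleftrightarrow>
      (\<forall>w \<in> V. inner (Smap br J z (J v) - J (Smap br J z v)) w = 0)" if "v \<in> V" for v
  proof -
    have "Smap br J z (J v) - J (Smap br J z v) \<in> V"
      using Smap_in_vspace J_vspace subspace_diff[OF subspace_vspace] that by simp
    then show ?thesis by (metis eq_iff_diff_eq_0 inner_eq_zero_iff inner_zero_left)
  qed
  then show ?thesis
    unfolding S_commutes_def by (simp add: inner_nijenhuis_Smap)
qed

lemma nijenhuis_in_zeta0: "nijenhuis br J x y \<in> Z"
proof -
  have "nijenhuis br J x y = (br x y - br (J x) (J y)) + J (br (J x) y + br x (J y))"
    unfolding nijenhuis_def by simp
  then show ?thesis
    unfolding zeta0_iff using subspace_commutator bracket_in_commutator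
    by (meson subspace_add subspace_diff)
qed

lemma nijenhuis_add_zeta0:
  assumes "a \<in> Z" "c \<in> Z"
  shows "nijenhuis br J (a + x) (c + y) = nijenhuis br J x y"
  unfolding nijenhuis_def
  using assms J_zeta0 zeta0_central_left zeta0_central_right
  by (simp add: J_add br_ladd br_radd)

lemma integrable_iff_nijenhuis_vspace:
  "integrable br J \<longleftrightarrow> (\<forall>v \<in> V. \<forall>w \<in> V. nijenhuis br J v w = 0)"
  unfolding integrable_def
  by (metis zeta0_vspace_decomp nijenhuis_add_zeta0)

theorem integrable_iff_S_commutes: "integrable br J \<longleftrightarrow> (\<forall>z \<in> Z. S_commutes br J z)"
  unfolding integrable_iff_nijenhuis_vspace S_commutes_iff_inner_nijenhuis
  using nijenhuis_in_zeta0 by (metis inner_eq_zero_iff inner_zero_right)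

lemma S_commutes_add: "S_commutes br J z1 \<Longrightarrow> S_commutes br J z2 \<Longrightarrow> S_commutes br J (z1 + z2)"
  unfolding S_commutes_def by (simp add: Smap_add J_add)

lemma S_commutes_J: "S_commutes br J z \<Longrightarrow> S_commutes br J (J z)"
  unfolding S_commutes_def by (simp add: Smap_J J_uminus)

theorem integrable_iff_S_commutes_generating:
  assumes "p \<subseteq> Z" "subspace_sum p (J ` p) = Z"
  shows "integrable br J \<longleftrightarrow> (\<forall>z \<in> p. S_commutes br J z)"
proof -
  have "S_commutes br J z" if "\<forall>z \<in> p. S_commutes br J z" "z \<in> Z" for z
  proof -
    obtain a b where "a \<in> p" "b \<in> p" "z = a + J b"
      using assms(2) \<open>z \<in> Z\<close> unfolding subspace_sum_def by blast
    then show ?thesis using that S_commutes_add S_commutes_J by simp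
  qed
  then show ?thesis
    using assms(1) integrable_iff_S_commutes by blast
qed

end

theorem mainTheorem11:
  fixes br :: "'a::euclidean_space \<Rightarrow> 'a \<Rightarrow> 'a" and J :: "'a \<Rightarrow> 'a"
  assumes "two_step_nilpotent br"
    and "linear J"
    and "\<And>x. J (J x) = - x"
    and "J ` commutator br \<subseteq> lie_center br"
    and "\<And>x y. inner (J x) (J y) = inner x y"
  shows "(integrable br J \<longleftrightarrow> (\<forall>z \<in> zeta0 br J. S_commutes br J z)) \<and>
         (\<forall>p. subspace p \<and> p \<subseteq> zeta0 br J \<and> subspace_sum p (J ` p) = zeta0 br J \<and>
               p \<inter> J ` p = {0} \<longrightarrow>
               (integrable br J \<longleftrightarrow> (\<forall>z \<in> p. S_commutes br J z)))"
proof -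
  interpret two_step_complex_structure br J
    by (rule two_step_complex_structure.intro) (use assms in \<open>auto simp: two_step_nilpotent_def\<close>)
  show ?thesis
    using integrable_iff_S_commutes integrable_iff_S_commutes_generating by blast
qed

end
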